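(* For every subset $J'\subseteq J$ and every start time $t\ge 0$, there exists a partial potential schedule of $J'$ starting at $t$.
   Context: $J$ is a finite set of jobs; job $j$ has processing time $p_j>0$ and weight $w_j>0$. For $J'\subseteq J$ and $t\ge0$, a partial schedule of $J'$ starting at $t$ is an ordering of $J'$ processed consecutively without idle time from time $t$; job $j$ has (absolute) start time $t_j$. For $s\ge 0$, $\varphi_j(s)=\frac{w_j}{p_j(p_j+s)}$. For jobs $i,j$ with $w_ip_j\neq w_jp_i$, $t^*_{ij}=\frac{w_jp_i^2-w_ip_j^2}{w_ip_j-w_jp_i}$ (the unique real $s$ with $\varphi_i(s)=\varphi_j(s)$). Dominance rule: for an interval $I\subseteq[0,\infty)$, the relation "$i$ dominates $j$ on $I$" is violated by a (partial) schedule if $j$ is processed before $i$ and both $t_j\in I$ and $t_i-p_j\in I$. The rule contains, for each pair of distinct jobs $i,j$ with $(p_i,w_i)\ne(p_j,w_j)$: (1) if $\varphi_i(s)\ge\varphi_j(s)$ for all $s\ge 0$, "$i$ dominates $j$ on $[0,\infty)$"; (2) otherwise, if $\varphi_j(s)\ge\varphi_i(s)$ for all $s\ge0$, "$j$ dominates $i$ on $[0,\infty)$"; (3) otherwise, labelling the pair so that $\varphi_i(0)>\varphi_j(0)$, $t^*_{ij}>0$ is defined and the rule contains "$i$ dominates $j$ on $[0,t^*_{ij})$" and "$j$ dominates $i$ on $[t^*_{ij},\infty)$". A partial schedule of $J'$ is a partial potential schedule if it violates no relation of the rule between two jobs of $J'$. *)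

theory Defs
  imports Complex_Main
begin

definition phi :: "('j \<Rightarrow> real) \<Rightarrow> ('j \<Rightarrow> real) \<Rightarrow> 'j \<Rightarrow> real \<Rightarrow> real" where
  "phi p w j s = w j / (p j * (p j + s))"

definition tstar :: "('j \<Rightarrow> real) \<Rightarrow> ('j \<Rightarrow> real) \<Rightarrow> 'j \<Rightarrow> 'j \<Rightarrow> real" where
  "tstar p w i j = (w j * (p i)^2 - w i * (p j)^2) / (w i * p j - w j * p i)"

definition phi_ge :: "('j \<Rightarrow> real) \<Rightarrow> ('j \<Rightarrow> real) \<Rightarrow> 'j \<Rightarrow> 'j \<Rightarrow> bool" where
  "phi_ge p w i j \<longleftrightarrow> (\<forall>s\<ge>0. phi p w i s \<ge> phi p w j s)"

text \<open>The dominance rule: the set of relations (i, j, I) meaning "i dominates j on I".\<close>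
definition dominance_rule :: "'j set \<Rightarrow> ('j \<Rightarrow> real) \<Rightarrow> ('j \<Rightarrow> real) \<Rightarrow> ('j \<times> 'j \<times> real set) set" where
  "dominance_rule J p w = {(i, j, I) | i j I.
     i \<in> J \<and> j \<in> J \<and> i \<noteq> j \<and> (p i, w i) \<noteq> (p j, w j) \<and>
     ( (phi_ge p w i j \<and> I = {0..})
     \<or> (\<not> phi_ge p w i j \<and> \<not> phi_ge p w j i \<and>
          ((phi p w i 0 > phi p w j 0 \<and> I = {0..<tstar p w i j})
         \<or> (phi p w j 0 > phi p w i 0 \<and> I = {tstar p w j i..}))))}"

definition start_time :: "('j \<Rightarrow> real) \<Rightarrow> real \<Rightarrow> 'j list \<Rightarrow> nat \<Rightarrow> real" where
  "start_time p t \<sigma> k = t + sum_list (map p (take k \<sigma>))"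

definition partial_schedule :: "'j set \<Rightarrow> 'j list \<Rightarrow> bool" where
  "partial_schedule J' \<sigma> \<longleftrightarrow> distinct \<sigma> \<and> set \<sigma> = J'"

definition violates :: "('j \<Rightarrow> real) \<Rightarrow> real \<Rightarrow> 'j list \<Rightarrow> 'j \<Rightarrow> 'j \<Rightarrow> real set \<Rightarrow> bool" where
  "violates p t \<sigma> i j I \<longleftrightarrow> (\<exists>k l. k < l \<and> l < length \<sigma> \<and> \<sigma> ! k = j \<and> \<sigma> ! l = i \<and>
       start_time p t \<sigma> k \<in> I \<and> start_time p t \<sigma> l - p j \<in> I)"

definition partial_potential_schedule ::
  "'j set \<Rightarrow> ('j \<Rightarrow> real) \<Rightarrow> ('j \<Rightarrow> real) \<Rightarrow> 'j set \<Rightarrow> real \<Rightarrow> 'j list \<Rightarrow> bool" where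
  "partial_potential_schedule J p w J' t \<sigma> \<longleftrightarrow> partial_schedule J' \<sigma> \<and>
     (\<forall>(i, j, I) \<in> dominance_rule J p w. i \<in> J' \<longrightarrow> j \<in> J' \<longrightarrow> \<not> violates p t \<sigma> i j I)"

end

theory Submission
  imports Defs "HOL-Library.Product_Lexorder"
begin

text \<open>Schedule greedily: whenever the machine becomes free at time \<open>s\<close>, start a remaining job
  with the largest \<open>\<phi>(s)\<close>, preferring the longer job among ties. Clearing denominators,
  \<open>\<phi>\<^sub>i(s) \<ge> \<phi>\<^sub>j(s)\<close> iff \<open>a s + b \<ge> 0\<close> with \<open>a\<close> = \<open>gap_slope\<close>, \<open>b\<close> = \<open>gap_offset\<close>, and
  \<open>t\<^sup>*\<^sub>i\<^sub>j = -b/a\<close>. Checking the three shapes of the rule, at every time of an interval on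
  which \<open>i\<close> dominates \<open>j\<close> the greedy order strictly prefers \<open>i\<close> to \<open>j\<close>; at the only possible
  tie of \<open>\<phi>\<close>, the boundary \<open>s = t\<^sup>*\<^sub>i\<^sub>j\<close> or \<open>s = 0\<close>, one computes \<open>p\<^sub>i > p\<^sub>j\<close>.
  So whenever the greedy schedule starts \<open>j\<close> before \<open>i\<close>, \<open>t\<^sub>j\<close> lies outside every such
  interval and no relation of the rule is violated.\<close>

definition gap_slope :: "('j \<Rightarrow> real) \<Rightarrow> ('j \<Rightarrow> real) \<Rightarrow> 'j \<Rightarrow> 'j \<Rightarrow> real" where
  "gap_slope p w i j = w i * p j - w j * p i"

definition gap_offset :: "('j \<Rightarrow> real) \<Rightarrow> ('j \<Rightarrow> real) \<Rightarrow> 'j \<Rightarrow> 'j \<Rightarrow> real" where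
  "gap_offset p w i j = w i * (p j)\<^sup>2 - w j * (p i)\<^sup>2"

lemma affine_nonneg_on_nonneg_iff:
  fixes a b :: real
  shows "(\<forall>x\<ge>0. 0 \<le> a * x + b) \<longleftrightarrow> 0 \<le> a \<and> 0 \<le> b"
proof
  assume nonneg: "\<forall>x\<ge>0. 0 \<le> a * x + b"
  then have "0 \<le> b" by auto
  moreover have "0 \<le> a"
  proof (rule ccontr)
    assume "\<not> 0 \<le> a"
    then have "a * ((b + 1) / - a) + b < 0" and "0 \<le> (b + 1) / - a"
      using \<open>0 \<le> b\<close> by (simp_all add: field_simps)
    then show False using nonneg by fastforce
  qed
  ultimately show "0 \<le> a \<and> 0 \<le> b" by simp
qed simp

lemma phi_le_phi_iff_gap:
  assumes "p i > 0" "p j > 0" "s \<ge> 0"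
  shows "phi p w j s \<le> phi p w i s \<longleftrightarrow> 0 \<le> gap_slope p w i j * s + gap_offset p w i j"
    and "phi p w i s \<le> phi p w j s \<longleftrightarrow> gap_slope p w i j * s + gap_offset p w i j \<le> 0"
proof -
  have "p i * (p i + s) > 0" "p j * (p j + s) > 0" using assms by auto
  then have "phi p w j s \<le> phi p w i s \<longleftrightarrow> w j * p i * (p i + s) \<le> w i * p j * (p j + s)"
    and "phi p w i s \<le> phi p w j s \<longleftrightarrow> w i * p j * (p j + s) \<le> w j * p i * (p i + s)"
    unfolding phi_def by (simp_all add: divide_simps mult.commute mult.left_commute)
  then show "phi p w j s \<le> phi p w i s \<longleftrightarrow> 0 \<le> gap_slope p w i j * s + gap_offset p w i j"
    and "phi p w i s \<le> phi p w j s \<longleftrightarrow> gap_slope p w i j * s + gap_offset p w i j \<le> 0"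
    unfolding gap_slope_def gap_offset_def by (simp_all add: algebra_simps power2_eq_square)
qed

lemma phi_ge_iff_gap:
  assumes "p i > 0" "p j > 0"
  shows "phi_ge p w i j \<longleftrightarrow> 0 \<le> gap_slope p w i j \<and> 0 \<le> gap_offset p w i j"
    and "phi_ge p w j i \<longleftrightarrow> gap_slope p w i j \<le> 0 \<and> gap_offset p w i j \<le> 0"
proof -
  have "phi_ge p w i j \<longleftrightarrow> (\<forall>s\<ge>0. 0 \<le> gap_slope p w i j * s + gap_offset p w i j)"
    and "phi_ge p w j i \<longleftrightarrow> (\<forall>s\<ge>0. 0 \<le> - gap_slope p w i j * s + - gap_offset p w i j)"
    unfolding phi_ge_def using phi_le_phi_iff_gap[of p i j _ w] assms by auto
  then show "phi_ge p w i j \<longleftrightarrow> 0 \<le> gap_slope p w i j \<and> 0 \<le> gap_offset p w i j"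
    and "phi_ge p w j i \<longleftrightarrow> gap_slope p w i j \<le> 0 \<and> gap_offset p w i j \<le> 0"
    unfolding affine_nonneg_on_nonneg_iff by auto
qed

lemma tstar_eq_gap_root:
  "tstar p w i j = - gap_offset p w i j / gap_slope p w i j"
  "tstar p w j i = - gap_offset p w i j / gap_slope p w i j"
  unfolding tstar_def gap_offset_def gap_slope_def by (simp_all add: divide_simps algebra_simps)

lemma gap_offset_minus_slope:
  "gap_offset p w i j - gap_slope p w i j * p j = w j * p i * (p j - p i)"
  unfolding gap_offset_def gap_slope_def by (simp add: algebra_simps power2_eq_square)

lemma p_le_p_iff_gap:
  assumes "p i > 0" "w j > 0"
  shows "p i \<le> p j \<longleftrightarrow> gap_slope p w i j * p j \<le> gap_offset p w i j"
proof -
  have "p i \<le> p j \<longleftrightarrow> 0 \<le> w j * p i * (p j - p i)"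
    using assms mult_le_cancel_left_pos[of "w j * p i" 0 "p j - p i"] by simp
  then show ?thesis unfolding gap_offset_minus_slope[symmetric] by simp
qed

lemma gap_eq_zero_iff:
  assumes "p i > 0" "p j > 0" "w j > 0"
  shows "gap_slope p w i j = 0 \<and> gap_offset p w i j = 0 \<longleftrightarrow> p i = p j \<and> w i = w j"
proof
  assume gap: "gap_slope p w i j = 0 \<and> gap_offset p w i j = 0"
  then have "p i = p j" using gap_offset_minus_slope[of p w i j] assms by simp
  with gap assms(2) show "p i = p j \<and> w i = w j"
    unfolding gap_slope_def by (simp add: algebra_simps)
qed (simp add: gap_slope_def gap_offset_def)

lemma dominance_rule_cases:
  assumes "(i, j, I) \<in> dominance_rule J p w"
    and "p i > 0" "p j > 0" "w j > 0"
  obtains (everywhere)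
      "0 \<le> gap_slope p w i j" "0 \<le> gap_offset p w i j" "p i \<noteq> p j \<or> w i \<noteq> w j" "I = {0..}"
    | (before_root)
      "gap_slope p w i j < 0" "0 < gap_offset p w i j"
      "I = {0..< - gap_offset p w i j / gap_slope p w i j}"
    | (after_root)
      "0 < gap_slope p w i j" "gap_offset p w i j < 0"
      "I = {- gap_offset p w i j / gap_slope p w i j..}"
proof -
  have phi0: "phi p w j 0 < phi p w i 0 \<longleftrightarrow> 0 < gap_offset p w i j"
    "phi p w i 0 < phi p w j 0 \<longleftrightarrow> gap_offset p w i j < 0"
    using phi_le_phi_iff_gap[of p i j 0 w] assms(2,3) by (auto simp flip: not_le)
  note ge = phi_ge_iff_gap[of p i j w, OF assms(2,3)]
  have "(p i, w i) \<noteq> (p j, w j)"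
    and "(phi_ge p w i j \<and> I = {0..}) \<or> (\<not> phi_ge p w i j \<and> \<not> phi_ge p w j i \<and>
      ((phi p w j 0 < phi p w i 0 \<and> I = {0..<tstar p w i j})
     \<or> (phi p w i 0 < phi p w j 0 \<and> I = {tstar p w j i..})))"
    using assms(1) unfolding dominance_rule_def by auto
  then show thesis
    using that gap_eq_zero_iff[of p i j w, OF assms(2-4)]
    unfolding phi0 ge tstar_eq_gap_root[where i = i and j = j] by auto
qed

text \<open>Ordered lexicographically (\<open>Product_Lexorder\<close>): larger \<open>\<phi>\<close> first, ties broken in
  favour of the longer job.\<close>

definition greedy_key :: "('j \<Rightarrow> real) \<Rightarrow> ('j \<Rightarrow> real) \<Rightarrow> real \<Rightarrow> 'j \<Rightarrow> real \<times> real" where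
  "greedy_key p w s j = (phi p w j s, p j)"

lemma greedy_key_le_iff_gap:
  assumes "p i > 0" "p j > 0" "s \<ge> 0"
  shows "greedy_key p w s i \<le> greedy_key p w s j \<longleftrightarrow>
    gap_slope p w i j * s + gap_offset p w i j < 0 \<or>
    gap_slope p w i j * s + gap_offset p w i j = 0 \<and> p i \<le> p j"
  using phi_le_phi_iff_gap[of p i j s w] assms unfolding greedy_key_def by auto

lemma greedy_key_le_not_in_dominance_interval:
  assumes rule: "(i, j, I) \<in> dominance_rule J p w"
    and pos: "p i > 0" "p j > 0" "w j > 0"
    and "s \<ge> 0" and key_le: "greedy_key p w s i \<le> greedy_key p w s j"
  shows "s \<notin> I"
proof
  assume "s \<in> I"
  define a b where "a = gap_slope p w i j" and "b = gap_offset p w i j"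
  have gap: "a * s + b < 0 \<or> a * s + b = 0 \<and> p i \<le> p j"
    using key_le greedy_key_le_iff_gap[of p i j s w] pos(1,2) \<open>s \<ge> 0\<close> unfolding a_def b_def by simp
  have p_le_iff: "p i \<le> p j \<longleftrightarrow> a * p j \<le> b"
    using pos(1,3) unfolding a_def b_def by (rule p_le_p_iff_gap)
  from rule pos show False
  proof (cases rule: dominance_rule_cases)
    case everywhere
    then have "a * s \<ge> 0" using \<open>s \<ge> 0\<close> unfolding a_def by simp
    with gap everywhere have "b = 0" "p i \<le> p j" unfolding b_def by auto
    then have "a = 0" using everywhere(1) p_le_iff pos(2) unfolding a_def
      by (simp add: mult_le_0_iff)
    then show False using \<open>b = 0\<close> everywhere(3) gap_eq_zero_iff[of p i j w] pos unfolding a_def b_def by blast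
  next
    case before_root
    then have "a * s + b > 0" using \<open>s \<in> I\<close> unfolding a_def b_def by (simp add: field_simps)
    then show False using gap by simp
  next
    case after_root
    then have "a * s + b \<ge> 0" using \<open>s \<in> I\<close> unfolding a_def b_def by (simp add: field_simps)
    then have "p i \<le> p j" using gap by simp
    moreover have "b < a * p j"
      using after_root mult_pos_pos[OF _ pos(2)] unfolding a_def b_def by fastforce
    ultimately show False using p_le_iff by simp
  qed
qed

fun greedy_wrt :: "(real \<Rightarrow> 'j \<Rightarrow> 'k::linorder) \<Rightarrow> ('j \<Rightarrow> real) \<Rightarrow> real \<Rightarrow> 'j list \<Rightarrow> bool" where
  "greedy_wrt key p t [] \<longleftrightarrow> True"
| "greedy_wrt key p t (j # \<sigma>) \<longleftrightarrow>
     (\<forall>i\<in>set \<sigma>. key t i \<le> key t j) \<and> greedy_wrt key p (t + p j) \<sigma>"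

lemma greedy_wrt_exists:
  assumes "finite S"
  shows "\<exists>\<sigma>. distinct \<sigma> \<and> set \<sigma> = S \<and> greedy_wrt key p t \<sigma>"
  using assms
proof (induction S arbitrary: t rule: finite_remove_induct)
  case empty
  show ?case by simp
next
  case (remove S)
  have "Max (key t ` S) \<in> key t ` S"
    using remove.hyps(1,2) by simp
  then obtain j where j: "j \<in> S" "key t j = Max (key t ` S)"
    by (metis imageE)
  then have j_max: "\<forall>i\<in>S. key t i \<le> key t j"
    using remove.hyps(1) by simp
  obtain \<sigma> where "distinct \<sigma>" "set \<sigma> = S - {j}" "greedy_wrt key p (t + p j) \<sigma>"
    using remove.IH[OF j(1)] by blast
  then show ?case
    using j(1) j_max by (intro exI[of _ "j # \<sigma>"]) auto
qed

lemma start_time_Cons: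
  "start_time p t (j # \<sigma>) 0 = t"
  "start_time p t (j # \<sigma>) (Suc k) = start_time p (t + p j) \<sigma> k"
  unfolding start_time_def by simp_all

lemma greedy_wrt_nth:
  assumes "greedy_wrt key p t \<sigma>" "k < l" "l < length \<sigma>"
  shows "key (start_time p t \<sigma> k) (\<sigma> ! l) \<le> key (start_time p t \<sigma> k) (\<sigma> ! k)"
  using assms
proof (induction \<sigma> arbitrary: t k l)
  case Nil
  then show ?case by simp
next
  case (Cons j \<sigma>)
  obtain l' where l: "l = Suc l'" using Cons.prems(2) by (cases l) auto
  show ?case
  proof (cases k)
    case 0
    then show ?thesis using Cons.prems l by (simp add: start_time_Cons)
  next
    case (Suc k')
    then show ?thesis using Cons l by (simp add: start_time_Cons)
  qed
qed

lemma start_time_nonneg: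
  assumes "t \<ge> 0" "\<And>j. j \<in> set \<sigma> \<Longrightarrow> p j \<ge> 0"
  shows "start_time p t \<sigma> k \<ge> 0"
proof -
  have "sum_list (map p (take k \<sigma>)) \<ge> 0"
    by (rule sum_list_nonneg) (auto dest: in_set_takeD intro: assms(2))
  then show ?thesis using assms(1) unfolding start_time_def by simp
qed

theorem lemma6:
  fixes J :: "'j set" and p w :: "'j \<Rightarrow> real"
  assumes "finite J"
    and "\<And>j. j \<in> J \<Longrightarrow> p j > 0"
    and "\<And>j. j \<in> J \<Longrightarrow> w j > 0"
  shows "\<forall>J' t. J' \<subseteq> J \<longrightarrow> t \<ge> 0 \<longrightarrow> (\<exists>\<sigma>. partial_potential_schedule J p w J' t \<sigma>)"
proof (intro allI impI)
  fix J' t assume "J' \<subseteq> J" and "(t::real) \<ge> 0"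
  then obtain \<sigma> where \<sigma>: "distinct \<sigma>" "set \<sigma> = J'" "greedy_wrt (greedy_key p w) p t \<sigma>"
    using greedy_wrt_exists finite_subset[OF _ assms(1)] by metis
  have "\<not> violates p t \<sigma> i j I"
    if rule: "(i, j, I) \<in> dominance_rule J p w" and "i \<in> J'" "j \<in> J'" for i j I
  proof
    assume "violates p t \<sigma> i j I"
    then obtain k l where kl: "k < l" "l < length \<sigma>" "\<sigma> ! k = j" "\<sigma> ! l = i"
      and in_I: "start_time p t \<sigma> k \<in> I"
      unfolding violates_def by blast
    have "start_time p t \<sigma> k \<ge> 0"
      using start_time_nonneg \<open>t \<ge> 0\<close> \<sigma>(2) \<open>J' \<subseteq> J\<close> assms(2) by (metis less_imp_le subsetD)
    moreover have "greedy_key p w (start_time p t \<sigma> k) i \<le> greedy_key p w (start_time p t \<sigma> k) j"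
      using greedy_wrt_nth[OF \<sigma>(3) kl(1,2)] kl(3,4) by simp
    ultimately show False
      using greedy_key_le_not_in_dominance_interval[OF rule] in_I that(2,3) \<open>J' \<subseteq> J\<close> assms(2,3)
      by blast
  qed
  then show "\<exists>\<sigma>. partial_potential_schedule J p w J' t \<sigma>"
    unfolding partial_potential_schedule_def partial_schedule_def using \<sigma>(1,2) by blast
qed

end
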